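(* Let $H\in\mathbb{R}^{n\times d}$ have rank $h$, $\Sigma\in\mathbb{R}^{n\times n}$ symmetric positive definite, $\Gamma_0$ the empirical covariance of an initial ensemble, $C_0=H\Gamma_0H^\top$ and $C_{i+1}=\Sigma-\Sigma(C_i+\Sigma)^{-1}\Sigma$. Consider the generalized eigenvalue problem $C_i\tilde w=\tilde\delta\Sigma\tilde w$, whose eigenvectors do not depend on $i$, with eigenvalue $\tilde\delta_{\ell,i}$ along eigenvector $\tilde w_\ell$. Then $\tilde\delta_{\ell,0}=0$ implies $\tilde\delta_{\ell,i}=0$ for all $i\ge1$, and $\tilde\delta_{\ell,0}>0$ implies $\tilde\delta_{\ell,i}>0$ for all $i\ge1$. Let $r$ be the number of positive eigenvalues. There is a $\Sigma$-orthogonal basis $\{\tilde w_1,\dots,\tilde w_n\}$ of $\mathbb{R}^n$ of eigenvectors such that: (1) $\tilde w_1,\dots,\tilde w_r\in\mathsf{Ran}(\Sigma^{-1}H)$ have positive eigenvalues, labeled with $\tilde\delta_{1,1}\ge\dots\ge\tilde\delta_{r,1}>0$, and this ordering is preserved for all $i\ge1$; (2) if $r<h$, $\tilde w_{r+1},\dots,\tilde w_h\in\mathsf{Ran}(\Sigma^{-1}H)$ have eigenvalue zero; (3) if $h<n$, $\tilde w_{h+1},\dots,\tilde w_n\in\mathsf{Ker}(H^\top)$ have eigenvalue zero.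
   Context: Empirical covariance of $v_0^{(1)},\dots,v_0^{(J)}$: $\Gamma_0=\frac1{J-1}\sum_j(v_0^{(j)}-\bar v_0)(v_0^{(j)}-\bar v_0)^\top$, $\bar v_0=\frac1J\sum_jv_0^{(j)}$. $\Sigma$-orthogonal means $\tilde w_k^\top\Sigma\tilde w_l=0$ for $k\ne l$. *)

theory Defs
  imports "HOL-Analysis.Analysis"
begin

definition outer_prod :: "real^'m \<Rightarrow> real^'n \<Rightarrow> real^'n^'m" where
  "outer_prod x y = (\<chi> a b. x $ a * y $ b)"

definition ens_mean :: "nat \<Rightarrow> (nat \<Rightarrow> real^'d) \<Rightarrow> real^'d" where
  "ens_mean J v = (1 / real J) *\<^sub>R (\<Sum>j\<in>{1..J}. v j)"

definition emp_cov :: "nat \<Rightarrow> (nat \<Rightarrow> real^'d) \<Rightarrow> real^'d^'d" where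
  "emp_cov J v = (1 / (real J - 1)) *\<^sub>R
     (\<Sum>j\<in>{1..J}. outer_prod (v j - ens_mean J v) (v j - ens_mean J v))"

definition spd :: "real^'n^'n \<Rightarrow> bool" where
  "spd S \<longleftrightarrow> transpose S = S \<and> (\<forall>x. x \<noteq> 0 \<longrightarrow> 0 < x \<bullet> (S *v x))"

end

theory Submission
  imports Defs
begin

text \<open>The pencil \<open>(C\<^sub>0, \<Sigma>)\<close> is symmetric with \<open>C\<^sub>0 \<succeq> 0\<close> and \<open>\<Sigma> \<succ> 0\<close>, so successive maximisers of the
  Rayleigh quotient \<open>x\<cdot>C\<^sub>0x / x\<cdot>\<Sigma>x\<close> on \<open>\<Sigma>\<close>-orthogonal complements give a \<open>\<Sigma>\<close>-orthogonal basis of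
  generalized eigenvectors with decreasing eigenvalues. Since \<open>C\<^sub>0 = H \<Gamma>\<^sub>0 H\<^sup>T\<close> maps into \<open>Ran H\<close> and
  vanishes on \<open>Ker H\<^sup>T\<close>, the basis can be assembled from \<open>rank H\<close> vectors of \<open>\<Sigma>\<^sup>-\<^sup>1 Ran H\<close> and
  from \<open>Ker H\<^sup>T\<close>, which is \<open>\<Sigma>\<close>-orthogonal to it.
  If \<open>C\<^sub>i w = \<delta> \<Sigma> w\<close> with \<open>\<delta> \<ge> 0\<close>, then \<open>(C\<^sub>i + \<Sigma>) w = (1 + \<delta>) \<Sigma> w\<close>, hence
  \<open>C\<^sub>i\<^sub>+\<^sub>1 w = \<Sigma> w - \<Sigma> w / (1 + \<delta>) = \<delta> / (1 + \<delta>) \<Sigma> w\<close>: every generalized eigenvector of \<open>C\<^sub>0\<close> stays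
  one, with eigenvalue \<open>\<delta> / (1 + i \<delta>)\<close> after \<open>i\<close> steps, a map that preserves zero, positivity and
  order. The eigenbasis also shows that every \<open>C\<^sub>i + \<Sigma>\<close> is invertible.\<close>

section \<open>Symmetric and positive definite matrices\<close>

lemma matrix_inv_cancel:
  fixes A :: "real^'n^'n"
  assumes "invertible A"
  shows "A *v (matrix_inv A *v x) = x" "matrix_inv A *v (A *v x) = x"
proof -
  have "A ** matrix_inv A = mat 1 \<and> matrix_inv A ** A = mat 1"
    using someI_ex[of "\<lambda>A'. A ** A' = mat 1 \<and> A' ** A = mat 1"] assms
    by (simp add: invertible_def matrix_inv_def)
  then show "A *v (matrix_inv A *v x) = x" "matrix_inv A *v (A *v x) = x"
    by (simp_all add: matrix_vector_mul_assoc)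
qed

lemma spd_symmetric: "spd S \<Longrightarrow> transpose S = S"
  unfolding spd_def by blast

lemma spd_quadratic_pos: "spd S \<Longrightarrow> x \<noteq> 0 \<Longrightarrow> 0 < x \<bullet> (S *v x)"
  unfolding spd_def by blast

lemma spd_invertible:
  fixes S :: "real^'n^'n"
  assumes "spd S"
  shows "invertible S"
proof -
  have "\<And>x. S *v x = 0 \<Longrightarrow> x = 0"
    using spd_quadratic_pos[OF assms] by force
  then show ?thesis
    using matrix_left_invertible_ker invertible_left_inverse by blast
qed

lemma inner_matrix_vector_transpose:
  fixes M :: "real^'m^'n"
  shows "x \<bullet> (M *v z) = (transpose M *v x) \<bullet> z"
  by (simp add: dot_lmul_matrix[symmetric])

lemma symmetric_inner_commute:
  fixes M :: "real^'n^'n"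
  assumes "transpose M = M"
  shows "x \<bullet> (M *v y) = y \<bullet> (M *v x)"
  by (metis assms inner_commute inner_matrix_vector_transpose)

lemma quadratic_form_add_scaleR:
  fixes M :: "real^'n^'n"
  assumes "transpose M = M"
  shows "(x + t *\<^sub>R z) \<bullet> (M *v (x + t *\<^sub>R z)) =
    x \<bullet> (M *v x) + 2 * t * (x \<bullet> (M *v z)) + t\<^sup>2 * (z \<bullet> (M *v z))"
  using symmetric_inner_commute[OF assms, of z x]
  by (simp add: matrix_vector_right_distrib matrix_vector_mult_scaleR inner_add_left
      inner_add_right power2_eq_square algebra_simps)

lemma quadratic_form_scaleR:
  fixes M :: "real^'n^'n"
  shows "(c *\<^sub>R y) \<bullet> (M *v (c *\<^sub>R y)) = c\<^sup>2 * (y \<bullet> (M *v y))"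
  by (simp add: matrix_vector_mult_scaleR power2_eq_square)

lemma spd_orthogonal_independent:
  fixes S :: "real^'n^'n"
  assumes S: "spd S" and "finite W" "0 \<notin> W"
    and orth: "pairwise (\<lambda>a b. a \<bullet> (S *v b) = 0) W"
  shows "independent W"
proof -
  have "u w = 0" if u: "(\<Sum>v\<in>W. u v *\<^sub>R v) = 0" and w: "w \<in> W" for u w
  proof -
    have "0 = (\<Sum>v\<in>W. u v *\<^sub>R v) \<bullet> (S *v w)"
      using u by simp
    also have "\<dots> = (\<Sum>v\<in>W. u v * (v \<bullet> (S *v w)))"
      by (simp add: inner_sum_left)
    also have "\<dots> = u w * (w \<bullet> (S *v w))"
      using orth w \<open>finite W\<close>
      by (subst sum.remove[of W w]) (auto simp: pairwise_def intro!: sum.neutral)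
    finally show ?thesis
      using spd_quadratic_pos[OF S, of w] w \<open>0 \<notin> W\<close> by (metis mult_eq_0_iff less_irrefl)
  qed
  then show ?thesis
    using \<open>finite W\<close> by (auto simp: dependent_finite)
qed

lemma spd_orthogonal_basis:
  fixes S :: "real^'n^'n" and W :: "nat \<Rightarrow> real^'n"
  assumes S: "spd S" and nz: "\<And>l. l < CARD('n) \<Longrightarrow> W l \<noteq> 0"
    and orth: "pairwise (\<lambda>k l. W k \<bullet> (S *v W l) = 0) {..<CARD('n)}"
  shows "inj_on W {..<CARD('n)}" "independent (W ` {..<CARD('n)})"
    "span (W ` {..<CARD('n)}) = UNIV"
proof -
  show inj: "inj_on W {..<CARD('n)}"
  proof (rule inj_onI, rule ccontr)
    fix k l assume "k \<in> {..<CARD('n)}" "l \<in> {..<CARD('n)}" "W k = W l" "k \<noteq> l"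
    then have "W k \<bullet> (S *v W l) = 0"
      using orth unfolding pairwise_def by blast
    then have "W l \<bullet> (S *v W l) = 0"
      using \<open>W k = W l\<close> by simp
    then show False
      using spd_quadratic_pos[OF S nz, of l] \<open>l \<in> {..<CARD('n)}\<close> by simp
  qed
  show indep: "independent (W ` {..<CARD('n)})"
  proof (rule spd_orthogonal_independent[OF S])
    show "pairwise (\<lambda>a b. a \<bullet> (S *v b) = 0) (W ` {..<CARD('n)})"
      using orth unfolding pairwise_image by (simp add: pairwise_def)
  qed (use nz in auto)
  have "card (W ` {..<CARD('n)}) = dim (UNIV :: (real^'n) set)"
    using card_image[OF inj] by simp
  then show "span (W ` {..<CARD('n)}) = UNIV"
    using card_eq_dim[of "W ` {..<CARD('n)}" UNIV] indep by auto
qed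

section \<open>Generalized eigenvectors of a symmetric pencil\<close>

lemma linear_quadratic_nonpos_imp_zero:
  fixes a b :: real
  assumes "\<And>t. 2 * t * a + t\<^sup>2 * b \<le> 0"
  shows "a = 0"
proof (rule ccontr)
  assume "a \<noteq> 0"
  define c where "c = \<bar>b\<bar> + 1"
  have "0 < c" "0 < 2 * c + b"
    unfolding c_def by (cases "0 \<le> b"; simp)+
  have "2 * (a / c) * a + (a / c)\<^sup>2 * b = (a / c)\<^sup>2 * (2 * c + b)"
    using \<open>0 < c\<close> by (simp add: power2_eq_square field_simps)
  also have "\<dots> > 0"
    using \<open>a \<noteq> 0\<close> \<open>0 < c\<close> \<open>0 < 2 * c + b\<close> by simp
  finally show False
    using assms[of "a / c"] by simp
qed

lemma quadratic_form_nonpos_stationary: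
  fixes M :: "real^'n^'n"
  assumes M: "transpose M = M" and U: "subspace U"
    and nonpos: "\<And>y. y \<in> U \<Longrightarrow> y \<bullet> (M *v y) \<le> 0"
    and "x \<in> U" "x \<bullet> (M *v x) = 0" "z \<in> U"
  shows "x \<bullet> (M *v z) = 0"
proof (rule linear_quadratic_nonpos_imp_zero)
  fix t :: real
  have "x + t *\<^sub>R z \<in> U"
    using U \<open>x \<in> U\<close> \<open>z \<in> U\<close> by (simp add: subspace_add subspace_scale)
  then show "2 * t * (x \<bullet> (M *v z)) + t\<^sup>2 * (z \<bullet> (M *v z)) \<le> 0"
    using nonpos[of "x + t *\<^sub>R z"] \<open>x \<bullet> (M *v x) = 0\<close>
    unfolding quadratic_form_add_scaleR[OF M] by simp
qed

lemma continuous_on_quadratic_form: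
  fixes M :: "real^'n^'n"
  shows "continuous_on K (\<lambda>y. y \<bullet> (M *v y))"
  using matrix_vector_mult_linear_continuous_on[of K M] by (intro continuous_intros)

lemma rayleigh_quotient_scaleR:
  fixes C S :: "real^'n^'n"
  assumes "c \<noteq> 0"
  shows "(c *\<^sub>R y) \<bullet> (C *v (c *\<^sub>R y)) / ((c *\<^sub>R y) \<bullet> (S *v (c *\<^sub>R y))) =
    y \<bullet> (C *v y) / (y \<bullet> (S *v y))"
  unfolding quadratic_form_scaleR using assms by simp

lemma rayleigh_quotient_attains_max:
  fixes C S :: "real^'n^'n"
  assumes S: "spd S" and U: "subspace U" and "x0 \<in> U" "x0 \<noteq> 0"
  obtains x l where "x \<in> U" "x \<noteq> 0" "x \<bullet> (C *v x) = l * (x \<bullet> (S *v x))"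
    "\<And>y. y \<in> U \<Longrightarrow> y \<bullet> (C *v y) \<le> l * (y \<bullet> (S *v y))"
proof -
  define K where "K = sphere 0 1 \<inter> U"
  define f where "f y = (y \<bullet> (C *v y)) / (y \<bullet> (S *v y))" for y
  have normalize: "(1 / norm y) *\<^sub>R y \<in> K" if "y \<in> U" "y \<noteq> 0" for y
    using that U unfolding K_def by (auto simp: subspace_scale)
  have "compact K"
    unfolding K_def by (intro compact_Int_closed compact_sphere closed_subspace U)
  moreover have "K \<noteq> {}"
    using normalize[OF \<open>x0 \<in> U\<close> \<open>x0 \<noteq> 0\<close>] by blast
  moreover have "continuous_on K f"
  proof -
    have "y \<bullet> (S *v y) \<noteq> 0" if "y \<in> K" for y
      using that spd_quadratic_pos[OF S, of y] unfolding K_def by force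
    then show ?thesis
      unfolding f_def by (intro continuous_on_divide continuous_on_quadratic_form) auto
  qed
  ultimately obtain x where "x \<in> K" and max: "\<And>y. y \<in> K \<Longrightarrow> f y \<le> f x"
    using continuous_attains_sup by metis
  then have "x \<in> U" "x \<noteq> 0"
    unfolding K_def by force+
  have bound: "y \<bullet> (C *v y) \<le> f x * (y \<bullet> (S *v y))" if "y \<in> U" for y
  proof (cases "y = 0")
    case False
    have "f y = f ((1 / norm y) *\<^sub>R y)"
      unfolding f_def by (rule rayleigh_quotient_scaleR[symmetric]) (simp add: False)
    also have "\<dots> \<le> f x"
      using max normalize that False by blast
    finally show ?thesis
      using spd_quadratic_pos[OF S False] unfolding f_def by (simp add: pos_divide_le_eq mult.commute)
  qed simp
  have "x \<bullet> (C *v x) = f x * (x \<bullet> (S *v x))"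
    using spd_quadratic_pos[OF S \<open>x \<noteq> 0\<close>] unfolding f_def by simp
  with \<open>x \<in> U\<close> \<open>x \<noteq> 0\<close> show ?thesis
    using bound by (rule that)
qed

text \<open>The Rayleigh quotient is stationary at a maximiser; since \<open>C\<close> maps \<open>U\<close> into \<open>S U\<close>, the
  residual \<open>C x - l S x\<close> is \<open>S u\<close> for some \<open>u \<in> U\<close>, and stationarity forces \<open>u \<bullet> S u = 0\<close>.\<close>
lemma rayleigh_max_generalized_eigvec:
  fixes C S :: "real^'n^'n"
  assumes C: "transpose C = C" and S: "spd S" and U: "subspace U"
    and inv: "\<And>x. x \<in> U \<Longrightarrow> \<exists>y\<in>U. C *v x = S *v y"
    and "x \<in> U" and max_at: "x \<bullet> (C *v x) = l * (x \<bullet> (S *v x))"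
    and max: "\<And>y. y \<in> U \<Longrightarrow> y \<bullet> (C *v y) \<le> l * (y \<bullet> (S *v y))"
  shows "C *v x = l *\<^sub>R (S *v x)"
proof -
  define M where "M = C - l *\<^sub>R S"
  have M_apply: "M *v y = C *v y - l *\<^sub>R (S *v y)" for y
    unfolding M_def by (simp add: matrix_vector_mult_diff_rdistrib scaleR_matrix_vector_assoc[symmetric])
  have "transpose M = transpose C - l *\<^sub>R transpose S"
    unfolding M_def by (simp add: transpose_def vec_eq_iff)
  then have M_sym: "transpose M = M"
    using C spd_symmetric[OF S] by (simp add: M_def)
  have stationary: "x \<bullet> (M *v z) = 0" if "z \<in> U" for z
  proof (rule quadratic_form_nonpos_stationary[OF M_sym U _ \<open>x \<in> U\<close> _ that])
    show "y \<bullet> (M *v y) \<le> 0" if "y \<in> U" for y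
      using max[OF that] by (simp add: M_apply inner_diff_right)
    show "x \<bullet> (M *v x) = 0"
      using max_at by (simp add: M_apply inner_diff_right)
  qed
  obtain y where "y \<in> U" "C *v x = S *v y"
    using inv[OF \<open>x \<in> U\<close>] by blast
  define u where "u = y - l *\<^sub>R x"
  have "u \<in> U"
    unfolding u_def using U \<open>y \<in> U\<close> \<open>x \<in> U\<close> by (simp add: subspace_diff subspace_scale)
  have Su: "S *v u = M *v x"
    unfolding u_def M_apply \<open>C *v x = S *v y\<close>
    by (simp add: matrix_vector_mult_diff_distrib matrix_vector_mult_scaleR)
  have "u \<bullet> (S *v u) = x \<bullet> (M *v u)"
    unfolding Su by (rule symmetric_inner_commute[OF M_sym])
  also have "\<dots> = 0"
    using stationary[OF \<open>u \<in> U\<close>] .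
  finally have "u = 0"
    using spd_quadratic_pos[OF S, of u] by force
  then show ?thesis
    using Su M_apply by simp
qed

lemma dim_le_dim_inter_hyperplane:
  fixes a x :: "'a::euclidean_space"
  assumes U: "subspace U" and "x \<in> U" "a \<bullet> x \<noteq> 0"
  shows "dim U \<le> dim (U \<inter> {y. a \<bullet> y = 0}) + 1"
proof -
  let ?U' = "U \<inter> {y. a \<bullet> y = 0}"
  have "y \<in> span (insert x ?U')" if "y \<in> U" for y
  proof -
    define c where "c = (a \<bullet> y) / (a \<bullet> x)"
    have "y - c *\<^sub>R x \<in> ?U'"
      using that \<open>x \<in> U\<close> U \<open>a \<bullet> x \<noteq> 0\<close>
      by (simp add: subspace_diff subspace_scale c_def inner_diff_right)
    then have "(y - c *\<^sub>R x) + c *\<^sub>R x \<in> span (insert x ?U')"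
      by (intro span_add span_mul) (simp_all add: span_base)
    then show ?thesis
      by simp
  qed
  then have "dim U \<le> dim (insert x ?U')"
    by (intro dim_mono) blast
  also have "\<dots> \<le> dim ?U' + 1"
    by (simp add: dim_insert)
  finally show ?thesis .
qed

lemma invariant_subspace_top_generalized_eigvec:
  fixes C S :: "real^'n^'n"
  assumes C: "transpose C = C" and S: "spd S" and U: "subspace U" and "\<not> U \<subseteq> {0}"
    and inv: "\<And>x. x \<in> U \<Longrightarrow> \<exists>y\<in>U. C *v x = S *v y"
  obtains x l where "x \<in> U" "x \<noteq> 0" "C *v x = l *\<^sub>R (S *v x)"
    "\<And>y. y \<in> U \<Longrightarrow> y \<bullet> (C *v y) \<le> l * (y \<bullet> (S *v y))"
proof -
  obtain x0 where "x0 \<in> U" "x0 \<noteq> 0"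
    using \<open>\<not> U \<subseteq> {0}\<close> by blast
  then obtain x l where "x \<in> U" "x \<noteq> 0" and max_at: "x \<bullet> (C *v x) = l * (x \<bullet> (S *v x))"
    and max: "\<And>y. y \<in> U \<Longrightarrow> y \<bullet> (C *v y) \<le> l * (y \<bullet> (S *v y))"
    using rayleigh_quotient_attains_max[OF S U] by metis
  moreover have "C *v x = l *\<^sub>R (S *v x)"
    by (rule rayleigh_max_generalized_eigvec[OF C S U inv \<open>x \<in> U\<close> max_at max])
  ultimately show ?thesis
    using that by blast
qed

lemma generalized_eigvec_orthogonal_complement_invariant:
  fixes C S :: "real^'n^'n"
  assumes C: "transpose C = C" and S: "spd S"
    and inv: "\<And>x. x \<in> U \<Longrightarrow> \<exists>y\<in>U. C *v x = S *v y" and eig: "C *v x = l *\<^sub>R (S *v x)"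
    and y: "y \<in> U \<inter> {y. (S *v x) \<bullet> y = 0}"
  shows "\<exists>z\<in>U \<inter> {y. (S *v x) \<bullet> y = 0}. C *v y = S *v z"
proof -
  obtain z where "z \<in> U" "C *v y = S *v z"
    using inv y by blast
  have "(S *v x) \<bullet> z = x \<bullet> (C *v y)"
    using symmetric_inner_commute[OF spd_symmetric[OF S], of z x] \<open>C *v y = S *v z\<close>
    by (simp add: inner_commute)
  also have "\<dots> = l * ((S *v x) \<bullet> y)"
    using symmetric_inner_commute[OF C, of x y] eig by (simp add: inner_commute)
  finally show ?thesis
    using \<open>z \<in> U\<close> \<open>C *v y = S *v z\<close> y by auto
qed

lemma generalized_eigvecs_of_invariant_subspace:
  fixes C S :: "real^'n^'n"
  assumes C: "transpose C = C" and S: "spd S"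
  shows "subspace U \<Longrightarrow> (\<And>x. x \<in> U \<Longrightarrow> \<exists>y\<in>U. C *v x = S *v y) \<Longrightarrow> m \<le> dim U \<Longrightarrow>
    \<exists>w \<delta>. (\<forall>k<m. w k \<in> U \<and> w k \<noteq> 0 \<and> C *v w k = \<delta> k *\<^sub>R (S *v w k)) \<and>
      pairwise (\<lambda>k l. w k \<bullet> (S *v w l) = 0) {..<m} \<and>
      (\<forall>k l. k \<le> l \<and> l < m \<longrightarrow> \<delta> l \<le> \<delta> k)"
proof (induction m arbitrary: U)
  case 0
  then show ?case by simp
next
  case (Suc m)
  note U = \<open>subspace U\<close> and inv = Suc.prems(2)
  have "\<not> U \<subseteq> {0}"
    using Suc.prems(3) dim_eq_0[of U] by linarith
  then obtain x l where "x \<in> U" "x \<noteq> 0" and eig: "C *v x = l *\<^sub>R (S *v x)"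
    and max: "\<And>y. y \<in> U \<Longrightarrow> y \<bullet> (C *v y) \<le> l * (y \<bullet> (S *v y))"
    using invariant_subspace_top_generalized_eigvec[OF C S U _ inv] by metis
  define U' where "U' = U \<inter> {y. (S *v x) \<bullet> y = 0}"
  have Sx_x: "(S *v x) \<bullet> x \<noteq> 0"
    using spd_quadratic_pos[OF S \<open>x \<noteq> 0\<close>] by (simp add: inner_commute)
  have "subspace U'"
    unfolding U'_def by (intro subspace_inter U subspace_hyperplane)
  moreover have "\<exists>z\<in>U'. C *v y = S *v z" if "y \<in> U'" for y
    using generalized_eigvec_orthogonal_complement_invariant[OF C S inv eig] that
    unfolding U'_def by blast
  moreover have "m \<le> dim U'"
    using dim_le_dim_inter_hyperplane[OF U \<open>x \<in> U\<close> Sx_x] Suc.prems(3) unfolding U'_def by simp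
  ultimately obtain w' \<delta>' where
    w': "\<forall>k<m. w' k \<in> U' \<and> w' k \<noteq> 0 \<and> C *v w' k = \<delta>' k *\<^sub>R (S *v w' k)" and
    orth': "pairwise (\<lambda>k l. w' k \<bullet> (S *v w' l) = 0) {..<m}" and
    mono': "\<forall>k l. k \<le> l \<and> l < m \<longrightarrow> \<delta>' l \<le> \<delta>' k"
    using Suc.IH by blast
  have orth_x: "x \<bullet> (S *v w' k) = 0" "w' k \<bullet> (S *v x) = 0" if "k < m" for k
    using w' that symmetric_inner_commute[OF spd_symmetric[OF S], of x "w' k"]
    unfolding U'_def by (auto simp: inner_commute)
  have le_l: "\<delta>' k \<le> l" if "k < m" for k
  proof -
    have "\<delta>' k * (w' k \<bullet> (S *v w' k)) \<le> l * (w' k \<bullet> (S *v w' k))"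
      using max[of "w' k"] w' that unfolding U'_def by simp
    then show ?thesis
      using spd_quadratic_pos[OF S, of "w' k"] w' that by simp
  qed
  define w where "w = case_nat x w'"
  define \<delta> where "\<delta> = case_nat l \<delta>'"
  have "\<forall>k<Suc m. w k \<in> U \<and> w k \<noteq> 0 \<and> C *v w k = \<delta> k *\<^sub>R (S *v w k)"
    using w' \<open>x \<in> U\<close> \<open>x \<noteq> 0\<close> eig unfolding w_def \<delta>_def U'_def
    by (auto simp: less_Suc_eq_0_disj)
  moreover have "pairwise (\<lambda>k l. w k \<bullet> (S *v w l) = 0) {..<Suc m}"
    using orth' orth_x unfolding w_def pairwise_def by (auto simp: less_Suc_eq_0_disj) blast
  moreover have "\<forall>k l. k \<le> l \<and> l < Suc m \<longrightarrow> \<delta> l \<le> \<delta> k"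
    using mono' le_l unfolding \<delta>_def by (auto simp: less_Suc_eq_0_disj split: nat.split)
  ultimately show ?case
    by blast
qed

lemma psd_generalized_eigenvalue_nonneg:
  fixes C S :: "real^'n^'n"
  assumes "spd S" "\<And>y. 0 \<le> y \<bullet> (C *v y)" "w \<noteq> 0" "C *v w = d *\<^sub>R (S *v w)"
  shows "0 \<le> d"
  using assms(2)[of w] spd_quadratic_pos[OF assms(1,3)] assms(4)
  by (simp add: zero_le_mult_iff)

section \<open>The empirical covariance\<close>

lemma matrix_vector_mult_sum_left:
  fixes A :: "'i \<Rightarrow> real^'m^'n"
  shows "(\<Sum>j\<in>I. A j) *v x = (\<Sum>j\<in>I. A j *v x)"
  by (induction I rule: infinite_finite_induct) (simp_all add: matrix_vector_mult_add_rdistrib)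

lemma outer_prod_quadratic_form: "y \<bullet> (outer_prod x x *v y) = (x \<bullet> y)\<^sup>2"
  by (simp add: outer_prod_def matrix_vector_mult_def inner_vec_def power2_eq_square
      sum_distrib_left mult_ac)

lemma emp_cov_symmetric: "transpose (emp_cov J v) = emp_cov J v"
  by (simp add: vec_eq_iff transpose_def emp_cov_def outer_prod_def sum_component mult.commute)

lemma emp_cov_psd:
  assumes "2 \<le> J"
  shows "0 \<le> y \<bullet> (emp_cov J v *v y)"
proof -
  have "y \<bullet> (emp_cov J v *v y) = (\<Sum>j\<in>{1..J}. ((v j - ens_mean J v) \<bullet> y)\<^sup>2) / (real J - 1)"
    by (simp add: emp_cov_def scaleR_matrix_vector_assoc[symmetric] matrix_vector_mult_sum_left
        inner_sum_right outer_prod_quadratic_form)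
  then show ?thesis
    using assms by (auto intro!: divide_nonneg_nonneg sum_nonneg)
qed

section \<open>A generalized eigenbasis of \<open>H G H\<^sup>T\<close>\<close>

lemma dim_ker_transpose:
  fixes H :: "real^'d^'n"
  shows "dim {y. transpose H *v y = 0} + rank H = CARD('n)"
proof -
  have ker: "{y. \<forall>x \<in> range ((*v) H). orthogonal x y} = {y. transpose H *v y = 0}"
  proof (intro set_eqI iffI)
    fix y assume "y \<in> {y. \<forall>x \<in> range ((*v) H). orthogonal x y}"
    then have "(transpose H *v y) \<bullet> (transpose H *v y) = 0"
      using inner_matrix_vector_transpose[of "transpose H *v y" "transpose H" y]
      by (simp add: orthogonal_def inner_commute)
    then show "y \<in> {y. transpose H *v y = 0}"
      by simp
  qed (auto simp: orthogonal_def inner_commute inner_matrix_vector_transpose[of _ H])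
  have "subspace (range ((*v) H))"
    by (intro linear_subspace_image matrix_vector_mul_linear subspace_UNIV)
  then show ?thesis
    using dim_subspace_orthogonal_to_vectors[of "range ((*v) H)" UNIV]
    unfolding ker[symmetric] rank_dim_range by simp
qed

lemma rank_le_dim_range_matrix_inv_mult:
  fixes A :: "real^'n^'n" and H :: "real^'d^'n"
  assumes "invertible A"
  shows "rank H \<le> dim (range (\<lambda>x. matrix_inv A *v (H *v x)))"
proof -
  have "range ((*v) H) \<subseteq> (*v) A ` range (\<lambda>x. matrix_inv A *v (H *v x))"
    using matrix_inv_cancel(1)[OF assms] by (auto simp: image_iff)
  then have "rank H \<le> dim ((*v) A ` range (\<lambda>x. matrix_inv A *v (H *v x)))"
    unfolding rank_dim_range by (rule dim_subset)
  also have "\<dots> \<le> dim (range (\<lambda>x. matrix_inv A *v (H *v x)))"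
    by (rule dim_image_le[OF matrix_vector_mul_linear])
  finally show ?thesis .
qed

lemma sandwich_psd:
  fixes H :: "real^'d^'n" and G :: "real^'d^'d"
  assumes "\<And>x. 0 \<le> x \<bullet> (G *v x)"
  shows "0 \<le> y \<bullet> ((H ** G ** transpose H) *v y)"
  unfolding matrix_vector_mul_assoc[symmetric] inner_matrix_vector_transpose[of y H]
  by (rule assms)

lemma spd_orthogonal_family_in_subspace:
  fixes S :: "real^'n^'n"
  assumes S: "spd S" and U: "subspace U" and "m \<le> dim U"
  obtains w where "\<And>k. k < m \<Longrightarrow> w k \<in> U \<and> w k \<noteq> 0"
    "pairwise (\<lambda>k l. w k \<bullet> (S *v w l) = 0) {..<m}"
proof -
  have "transpose (0 :: real^'n^'n) = 0"
    by (simp add: transpose_def vec_eq_iff)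
  moreover have "\<exists>y\<in>U. 0 *v x = S *v y" for x
    using subspace_0[OF U] by force
  ultimately obtain w \<delta> where w: "\<forall>k<m. w k \<in> U \<and> w k \<noteq> 0 \<and> 0 *v w k = \<delta> k *\<^sub>R (S *v w k)"
    and orth: "pairwise (\<lambda>k l. w k \<bullet> (S *v w l) = 0) {..<m}"
    using generalized_eigvecs_of_invariant_subspace[where C = 0, OF _ S U _ \<open>m \<le> dim U\<close>] by blast
  show ?thesis
  proof (rule that)
    show "w k \<in> U \<and> w k \<noteq> 0" if "k < m" for k
      using w that by blast
  qed (rule orth)
qed

lemma sandwich_generalized_eigvecs_range:
  fixes H :: "real^'d^'n" and G :: "real^'d^'d" and S :: "real^'n^'n"
  assumes S: "spd S" and G: "transpose G = G" "\<And>x. 0 \<le> x \<bullet> (G *v x)"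
  obtains w d where
    "\<And>k. k < rank H \<Longrightarrow> w k \<in> range (\<lambda>x. matrix_inv S *v (H *v x)) \<and> w k \<noteq> 0 \<and>
      (H ** G ** transpose H) *v w k = d k *\<^sub>R (S *v w k) \<and> 0 \<le> d k"
    "pairwise (\<lambda>k l. w k \<bullet> (S *v w l) = 0) {..<rank H}"
    "\<And>k l. k \<le> l \<Longrightarrow> l < rank H \<Longrightarrow> d l \<le> d k"
proof -
  let ?M = "H ** G ** transpose H" and ?V = "range (\<lambda>x. matrix_inv S *v (H *v x))"
  have M_sym: "transpose ?M = ?M"
    by (simp add: G matrix_transpose_mul matrix_mul_assoc)
  have "subspace ?V"
    unfolding matrix_vector_mul_assoc
    by (intro linear_subspace_image matrix_vector_mul_linear subspace_UNIV)
  moreover have "\<exists>y\<in>?V. ?M *v x = S *v y" for x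
  proof
    show "?M *v x = S *v (matrix_inv S *v (H *v (G *v (transpose H *v x))))"
      by (simp add: matrix_inv_cancel(1)[OF spd_invertible[OF S]] matrix_vector_mul_assoc[symmetric]
          del: transpose_matrix_vector)
  qed simp
  moreover have "rank H \<le> dim ?V"
    by (rule rank_le_dim_range_matrix_inv_mult[OF spd_invertible[OF S]])
  ultimately obtain w d where
    w: "\<forall>k<rank H. w k \<in> ?V \<and> w k \<noteq> 0 \<and> ?M *v w k = d k *\<^sub>R (S *v w k)" and
    orth: "pairwise (\<lambda>k l. w k \<bullet> (S *v w l) = 0) {..<rank H}" and
    mono: "\<forall>k l. k \<le> l \<and> l < rank H \<longrightarrow> d l \<le> d k"
    using generalized_eigvecs_of_invariant_subspace[OF M_sym S] by blast
  have psd: "0 \<le> y \<bullet> (?M *v y)" for y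
    by (rule sandwich_psd[OF G(2)])
  show ?thesis
  proof (rule that)
    show "w k \<in> ?V \<and> w k \<noteq> 0 \<and> ?M *v w k = d k *\<^sub>R (S *v w k) \<and> 0 \<le> d k"
      if "k < rank H" for k
    proof -
      have "w k \<noteq> 0" "?M *v w k = d k *\<^sub>R (S *v w k)"
        using w that by blast+
      then have "0 \<le> d k"
        by (rule psd_generalized_eigenvalue_nonneg[OF S psd])
      then show ?thesis
        using w that by blast
    qed
    show "d l \<le> d k" if "k \<le> l" "l < rank H" for k l
      using mono that by blast
  qed (rule orth)
qed

lemma spd_orthogonal_range_kernel:
  fixes H :: "real^'d^'n" and S :: "real^'n^'n"
  assumes S: "spd S" and "a \<in> range (\<lambda>x. matrix_inv S *v (H *v x))" and "transpose H *v b = 0"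
  shows "b \<bullet> (S *v a) = 0" and "a \<bullet> (S *v b) = 0"
proof -
  show "b \<bullet> (S *v a) = 0"
    using assms(2,3) by (auto simp: matrix_inv_cancel(1)[OF spd_invertible[OF S]]
        inner_matrix_vector_transpose[of b H] simp del: transpose_matrix_vector)
  then show "a \<bullet> (S *v b) = 0"
    using symmetric_inner_commute[OF spd_symmetric[OF S]] by metis
qed

lemma sandwich_generalized_eigenbasis:
  fixes H :: "real^'d^'n" and G :: "real^'d^'d" and S :: "real^'n^'n"
  assumes S: "spd S" and G: "transpose G = G" "\<And>x. 0 \<le> x \<bullet> (G *v x)"
  obtains W d where
    "\<And>l. l < CARD('n) \<Longrightarrow> W l \<noteq> 0"
    "pairwise (\<lambda>k l. W k \<bullet> (S *v W l) = 0) {..<CARD('n)}"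
    "\<And>l. l < CARD('n) \<Longrightarrow> (H ** G ** transpose H) *v W l = d l *\<^sub>R (S *v W l)"
    "antimono d" "\<And>l. rank H \<le> l \<Longrightarrow> d l = 0"
    "\<And>l. l < rank H \<Longrightarrow> W l \<in> range (\<lambda>x. matrix_inv S *v (H *v x))"
    "\<And>l. rank H \<le> l \<Longrightarrow> l < CARD('n) \<Longrightarrow> transpose H *v W l = 0"
proof -
  let ?h = "rank H" and ?n = "CARD('n)"
  obtain wV dV where wV: "\<And>k. k < ?h \<Longrightarrow> wV k \<in> range (\<lambda>x. matrix_inv S *v (H *v x)) \<and>
      wV k \<noteq> 0 \<and> (H ** G ** transpose H) *v wV k = dV k *\<^sub>R (S *v wV k) \<and> 0 \<le> dV k"
    and orthV: "pairwise (\<lambda>k l. wV k \<bullet> (S *v wV l) = 0) {..<?h}"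
    and monoV: "\<And>k l. k \<le> l \<Longrightarrow> l < ?h \<Longrightarrow> dV l \<le> dV k"
    using sandwich_generalized_eigvecs_range[OF S G] by blast
  have "subspace {y. transpose H *v y = 0}"
    by (intro linear_subspace_kernel matrix_vector_mul_linear)
  moreover have "?n - ?h \<le> dim {y. transpose H *v y = 0}"
    using dim_ker_transpose[of H] by simp
  ultimately obtain wK where wK: "\<And>k. k < ?n - ?h \<Longrightarrow> wK k \<in> {y. transpose H *v y = 0} \<and> wK k \<noteq> 0"
    and orthK: "pairwise (\<lambda>k l. wK k \<bullet> (S *v wK l) = 0) {..<?n - ?h}"
    by (rule spd_orthogonal_family_in_subspace[OF S]) (rule that)
  have cross: "wV k \<bullet> (S *v wK l) = 0 \<and> wK l \<bullet> (S *v wV k) = 0" if "k < ?h" "l < ?n - ?h" for k l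
  proof -
    have "wV k \<in> range (\<lambda>x. matrix_inv S *v (H *v x))" "transpose H *v wK l = 0"
      using wV[OF that(1)] wK[OF that(2)] by (auto simp del: transpose_matrix_vector)
    then show ?thesis
      using spd_orthogonal_range_kernel[OF S] by blast
  qed
  define W where "W l = (if l < ?h then wV l else wK (l - ?h))" for l
  define d where "d l = (if l < ?h then dV l else 0)" for l
  show ?thesis
  proof
    show "W l \<noteq> 0" if "l < ?n" for l
      using wV wK that unfolding W_def by (simp add: diff_less_mono)
    show "pairwise (\<lambda>k l. W k \<bullet> (S *v W l) = 0) {..<?n}"
      using orthV orthK cross unfolding pairwise_def W_def by (auto simp: diff_less_mono)
    show "(H ** G ** transpose H) *v W l = d l *\<^sub>R (S *v W l)" if "l < ?n" for l
      using wV wK that unfolding W_def d_def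
      by (auto simp: diff_less_mono matrix_vector_mul_assoc[symmetric] del: transpose_matrix_vector)
    show "antimono d"
      using monoV wV unfolding d_def antimono_def by auto
  qed (use wV wK in \<open>auto simp: W_def d_def diff_less_mono\<close>)
qed

section \<open>The iteration \<open>C\<^sub>i\<^sub>+\<^sub>1 = \<Sigma> - \<Sigma> (C\<^sub>i + \<Sigma>)\<^sup>-\<^sup>1 \<Sigma>\<close>\<close>

definition riccati_eig :: "real \<Rightarrow> nat \<Rightarrow> real" where
  "riccati_eig d i = d / (1 + real i * d)"

lemma riccati_eig_0 [simp]: "riccati_eig d 0 = d"
  by (simp add: riccati_eig_def)

lemma riccati_eig_Suc:
  assumes "0 \<le> d"
  shows "riccati_eig d (Suc i) = riccati_eig d i / (1 + riccati_eig d i)"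
proof -
  define a where "a = 1 + real i * d"
  have "0 < a"
    using assms unfolding a_def by (simp add: add_pos_nonneg)
  have "riccati_eig d (Suc i) = d / (a + d)"
    unfolding riccati_eig_def a_def by (simp add: algebra_simps)
  also have "\<dots> = (d / a) / (1 + d / a)"
    using \<open>0 < a\<close> by (simp add: field_simps)
  finally show ?thesis
    unfolding riccati_eig_def a_def .
qed

lemma riccati_eig_nonneg: "0 \<le> d \<Longrightarrow> 0 \<le> riccati_eig d i"
  by (simp add: riccati_eig_def)

lemma riccati_eig_pos_iff: "0 \<le> d \<Longrightarrow> 0 < riccati_eig d i \<longleftrightarrow> 0 < d"
  by (simp add: riccati_eig_def add_pos_nonneg zero_less_divide_iff)

lemma riccati_eig_mono:
  assumes "0 \<le> d" "d \<le> e"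
  shows "riccati_eig d i \<le> riccati_eig e i"
proof -
  have "0 < 1 + real i * d" "0 < 1 + real i * e"
    using assms by (simp_all add: add_pos_nonneg)
  moreover have "d * (1 + real i * e) \<le> e * (1 + real i * d)"
    using assms by (simp add: algebra_simps)
  ultimately show ?thesis
    unfolding riccati_eig_def by (simp add: divide_simps)
qed

lemma add_generalized_eigvec:
  fixes C S :: "real^'n^'n"
  assumes "C *v w = d *\<^sub>R (S *v w)" "0 \<le> d"
  shows "(C + S) *v ((1 / (1 + d)) *\<^sub>R w) = S *v w"
proof -
  have "(C + S) *v w = (1 + d) *\<^sub>R (S *v w)"
    using assms(1) by (simp add: matrix_vector_mult_add_rdistrib algebra_simps)
  then show ?thesis
    using assms(2) by (simp add: matrix_vector_mult_scaleR)
qed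

lemma riccati_step_generalized_eigvec:
  fixes C S :: "real^'n^'n"
  assumes inv: "invertible (C + S)" and eig: "C *v w = d *\<^sub>R (S *v w)" and "0 \<le> d"
  shows "(S - S ** matrix_inv (C + S) ** S) *v w = (d / (1 + d)) *\<^sub>R (S *v w)"
proof -
  have "matrix_inv (C + S) *v (S *v w) = (1 / (1 + d)) *\<^sub>R w"
    by (metis add_generalized_eigvec[OF eig \<open>0 \<le> d\<close>] matrix_inv_cancel(2)[OF inv])
  then have "(S - S ** matrix_inv (C + S) ** S) *v w = S *v w - (1 / (1 + d)) *\<^sub>R (S *v w)"
    by (simp add: matrix_vector_mult_diff_rdistrib matrix_vector_mul_assoc[symmetric]
        matrix_vector_mult_scaleR)
  also have "\<dots> = (1 - 1 / (1 + d)) *\<^sub>R (S *v w)"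
    by (simp add: scaleR_diff_left)
  also have "1 - 1 / (1 + d) = d / (1 + d)"
    using \<open>0 \<le> d\<close> by (simp add: field_simps)
  finally show ?thesis .
qed

lemma invertible_add_of_generalized_eigvecs:
  fixes C S :: "real^'n^'n"
  assumes S: "spd S" and span: "span (W ` I) = UNIV"
    and eig: "\<And>l. l \<in> I \<Longrightarrow> C *v W l = d l *\<^sub>R (S *v W l)"
    and nonneg: "\<And>l. l \<in> I \<Longrightarrow> 0 \<le> d l"
  shows "invertible (C + S)"
proof -
  let ?R = "range ((*v) (C + S))"
  have "S *v W l \<in> ?R" if "l \<in> I" for l
    using add_generalized_eigvec[OF eig nonneg, OF that that] by (metis rangeI)
  then have "span ((*v) S ` W ` I) \<subseteq> ?R"
    by (intro span_minimal linear_subspace_image) (auto intro: matrix_vector_mul_linear)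
  moreover have "span ((*v) S ` W ` I) = UNIV"
    unfolding span_linear_image[OF matrix_vector_mul_linear] span
    using matrix_inv_cancel(1)[OF spd_invertible[OF S]] by (metis surj_def)
  ultimately have "surj ((*v) (C + S))"
    by auto
  then show ?thesis
    using matrix_right_invertible_surjective invertible_right_inverse by blast
qed

lemma riccati_iterates_generalized_eigvec:
  fixes C :: "nat \<Rightarrow> real^'n^'n" and S :: "real^'n^'n"
  assumes step: "\<And>i. C (Suc i) = S - S ** matrix_inv (C i + S) ** S"
    and inv: "\<And>i. invertible (C i + S)"
    and eig: "C 0 *v w = d *\<^sub>R (S *v w)" and "0 \<le> d"
  shows "C i *v w = riccati_eig d i *\<^sub>R (S *v w)"
proof (induction i)
  case (Suc i)
  then show ?case
    unfolding step riccati_eig_Suc[OF \<open>0 \<le> d\<close>]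
    by (intro riccati_step_generalized_eigvec inv riccati_eig_nonneg \<open>0 \<le> d\<close>)
qed (simp add: eig)

lemma riccati_iterates_invertible:
  fixes C :: "nat \<Rightarrow> real^'n^'n" and S :: "real^'n^'n"
  assumes step: "\<And>i. C (Suc i) = S - S ** matrix_inv (C i + S) ** S"
    and S: "spd S" and span: "span (W ` I) = UNIV"
    and eig: "\<And>l. l \<in> I \<Longrightarrow> C 0 *v W l = d l *\<^sub>R (S *v W l)"
    and nonneg: "\<And>l. l \<in> I \<Longrightarrow> 0 \<le> d l"
  shows "invertible (C i + S)"
proof -
  have inv_if: "invertible (C i + S)"
    if "\<And>l. l \<in> I \<Longrightarrow> C i *v W l = riccati_eig (d l) i *\<^sub>R (S *v W l)" for i
    using that nonneg riccati_eig_nonneg by (intro invertible_add_of_generalized_eigvecs[OF S span]) blast+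
  have "\<forall>l\<in>I. C i *v W l = riccati_eig (d l) i *\<^sub>R (S *v W l)"
  proof (induction i)
    case (Suc i)
    then have "invertible (C i + S)"
      by (intro inv_if) blast
    then show ?case
      using Suc.IH nonneg
      by (auto simp: step riccati_eig_Suc intro!: riccati_step_generalized_eigvec riccati_eig_nonneg)
  qed (simp add: eig)
  then show ?thesis
    by (intro inv_if) blast
qed

lemma riccati_iterates_eigenvalue_sign:
  fixes C :: "nat \<Rightarrow> real^'n^'n" and S :: "real^'n^'n"
  assumes step: "\<And>i. C (Suc i) = S - S ** matrix_inv (C i + S) ** S"
    and inv: "\<And>i. invertible (C i + S)" and S: "spd S" and psd: "\<And>y. 0 \<le> y \<bullet> (C 0 *v y)"
    and "w \<noteq> 0" and eig: "C 0 *v w = d *\<^sub>R (S *v w)"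
  shows "\<exists>e. C i *v w = e *\<^sub>R (S *v w) \<and> (d = 0 \<longrightarrow> e = 0) \<and> (0 < d \<longrightarrow> 0 < e)"
proof (intro exI conjI impI)
  have "0 \<le> d"
    by (rule psd_generalized_eigenvalue_nonneg[OF S psd \<open>w \<noteq> 0\<close> eig])
  then show "C i *v w = riccati_eig d i *\<^sub>R (S *v w)"
    by (rule riccati_iterates_generalized_eigvec[OF step inv eig])
  show "0 < riccati_eig d i" if "0 < d"
    using that riccati_eig_pos_iff[of d i] by simp
qed (simp add: riccati_eig_def)

lemma antimono_pos_iff_less_card:
  fixes d :: "nat \<Rightarrow> real"
  assumes "antimono d" "d n \<le> 0"
  shows "0 < d l \<longleftrightarrow> l < card {l. l < n \<and> 0 < d l}"
proof -
  define r where "r = (LEAST l. d l \<le> 0)"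
  have "d r \<le> 0"
    unfolding r_def by (rule LeastI[of _ n]) (rule assms(2))
  have "r \<le> n"
    unfolding r_def by (rule Least_le) (rule assms(2))
  have pos: "0 < d l \<longleftrightarrow> l < r" for l
  proof
    assume "0 < d l"
    show "l < r"
    proof (rule ccontr)
      assume "\<not> l < r"
      then have "d l \<le> d r"
        by (intro antimonoD[OF assms(1)]) simp
      with \<open>d r \<le> 0\<close> \<open>0 < d l\<close> show False
        by linarith
    qed
  next
    assume "l < r"
    then have "\<not> d l \<le> 0"
      unfolding r_def by (rule not_less_Least)
    then show "0 < d l"
      by simp
  qed
  have "{l. l < n \<and> 0 < d l} = {..<r}"
    unfolding pos using \<open>r \<le> n\<close> by auto
  then have "card {l. l < n \<and> 0 < d l} = r"
    by simp
  then show ?thesis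
    using pos by simp
qed

lemma riccati_eig_profile:
  fixes d :: "nat \<Rightarrow> real"
  assumes mono: "antimono d" and zero: "\<And>l. h \<le> l \<Longrightarrow> d l = 0" and "h \<le> n"
  defines "r \<equiv> card {l. l < n \<and> 0 < d l}"
  shows "0 \<le> d l" and "r \<le> h"
    and "l < r \<Longrightarrow> 0 < riccati_eig (d l) i"
    and "r \<le> l \<Longrightarrow> riccati_eig (d l) i = 0"
    and "k \<le> l \<Longrightarrow> riccati_eig (d l) i \<le> riccati_eig (d k) i"
proof -
  have nonneg: "0 \<le> d l" for l
    using antimonoD[OF mono, of l "max l h"] zero[of "max l h"] by simp
  have pos_iff: "0 < d l \<longleftrightarrow> l < r" for l
    unfolding r_def using zero \<open>h \<le> n\<close> by (intro antimono_pos_iff_less_card[OF mono]) simp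
  show "0 \<le> d l"
    by (rule nonneg)
  show "r \<le> h"
    using pos_iff[of h] zero[of h] by simp
  show "l < r \<Longrightarrow> 0 < riccati_eig (d l) i"
    using pos_iff riccati_eig_pos_iff[OF nonneg] by blast
  show "r \<le> l \<Longrightarrow> riccati_eig (d l) i = 0"
    using pos_iff[of l] nonneg[of l] by (simp add: riccati_eig_def)
  show "k \<le> l \<Longrightarrow> riccati_eig (d l) i \<le> riccati_eig (d k) i"
    by (intro riccati_eig_mono nonneg antimonoD[OF mono])
qed

theorem proposition4p3:
  fixes H :: "real^'d^'n" and Sigma :: "real^'n^'n"
    and J :: nat and v :: "nat \<Rightarrow> real^'d"
    and C :: "nat \<Rightarrow> real^'n^'n" and h :: nat
  assumes rankH: "rank H = h"
    and spd: "spd Sigma"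
    and J: "2 \<le> J"
    and C0: "C 0 = H ** emp_cov J v ** transpose H"
    and Csuc: "\<And>i. C (Suc i) = Sigma - Sigma ** matrix_inv (C i + Sigma) ** Sigma"
  shows
    "(\<forall>(w::real^'n) d0. w \<noteq> 0 \<and> C 0 *v w = d0 *\<^sub>R (Sigma *v w) \<longrightarrow>
        (\<forall>i. \<exists>d. C i *v w = d *\<^sub>R (Sigma *v w) \<and>
                 (d0 = 0 \<longrightarrow> d = 0) \<and> (0 < d0 \<longrightarrow> 0 < d)))
     \<and>
     (\<exists>(w::nat \<Rightarrow> real^'n) (\<delta>::nat \<Rightarrow> nat \<Rightarrow> real).
        let r = card {l. l < CARD('n) \<and> 0 < \<delta> l 0} in
        (\<forall>l<CARD('n). w l \<noteq> 0) \<and>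
        inj_on w {..<CARD('n)} \<and>
        independent (w ` {..<CARD('n)}) \<and>
        span (w ` {..<CARD('n)}) = UNIV \<and>
        (\<forall>k<CARD('n). \<forall>l<CARD('n). k \<noteq> l \<longrightarrow> w k \<bullet> (Sigma *v w l) = 0) \<and>
        (\<forall>l<CARD('n). \<forall>i. C i *v w l = \<delta> l i *\<^sub>R (Sigma *v w l)) \<and>
        (\<forall>l<r. w l \<in> range (\<lambda>x. matrix_inv Sigma *v (H *v x)) \<and> (\<forall>i. 0 < \<delta> l i)) \<and>
        (\<forall>i\<ge>1. \<forall>k l. k \<le> l \<and> l < r \<longrightarrow> \<delta> l i \<le> \<delta> k i) \<and>
        (\<forall>l. r \<le> l \<and> l < h \<longrightarrow>
             w l \<in> range (\<lambda>x. matrix_inv Sigma *v (H *v x)) \<and> (\<forall>i. \<delta> l i = 0)) \<and>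
        (\<forall>l. h \<le> l \<and> l < CARD('n) \<longrightarrow>
             transpose H *v w l = 0 \<and> (\<forall>i. \<delta> l i = 0)))"
proof -
  let ?n = "CARD('n)"
  have G: "transpose (emp_cov J v) = emp_cov J v" "\<And>x. 0 \<le> x \<bullet> (emp_cov J v *v x)"
    by (simp_all add: emp_cov_symmetric emp_cov_psd[OF J])
  obtain W d where W_nz: "\<And>l. l < ?n \<Longrightarrow> W l \<noteq> 0"
    and W_orth: "pairwise (\<lambda>k l. W k \<bullet> (Sigma *v W l) = 0) {..<?n}"
    and eig0: "\<And>l. l < ?n \<Longrightarrow> C 0 *v W l = d l *\<^sub>R (Sigma *v W l)"
    and "antimono d" and d_zero: "\<And>l. h \<le> l \<Longrightarrow> d l = 0"
    and W_ran: "\<And>l. l < h \<Longrightarrow> W l \<in> range (\<lambda>x. matrix_inv Sigma *v (H *v x))"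
    and W_ker: "\<And>l. h \<le> l \<Longrightarrow> l < ?n \<Longrightarrow> transpose H *v W l = 0"
    by (rule sandwich_generalized_eigenbasis[OF spd G, of H, unfolded C0[symmetric] rankH]) (rule that)
  have "h \<le> ?n"
    using rank_bound[of H] rankH by simp
  note profile = riccati_eig_profile[OF \<open>antimono d\<close> d_zero this]
  have basis: "inj_on W {..<?n}" "independent (W ` {..<?n})" "span (W ` {..<?n}) = UNIV"
    using spd_orthogonal_basis[OF spd _ W_orth] W_nz by blast+
  have inv: "invertible (C i + Sigma)" for i
    by (rule riccati_iterates_invertible[of C Sigma W "{..<?n}" d, OF Csuc spd basis(3)])
      (simp_all add: eig0 profile(1))
  have C0_psd: "0 \<le> x \<bullet> (C 0 *v x)" for x
    unfolding C0 by (rule sandwich_psd[OF G(2)])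
  show ?thesis
    unfolding Let_def
  proof (intro conjI exI[of _ W] exI[of _ "\<lambda>l i. riccati_eig (d l) i"] allI impI,
      simp_all only: riccati_eig_0)
    show "\<exists>e. C i *v w = e *\<^sub>R (Sigma *v w) \<and> (d0 = 0 \<longrightarrow> e = 0) \<and> (0 < d0 \<longrightarrow> 0 < e)"
      if "w \<noteq> 0 \<and> C 0 *v w = d0 *\<^sub>R (Sigma *v w)" for w d0 i
      using that by (intro riccati_iterates_eigenvalue_sign[OF Csuc inv spd C0_psd]) auto
    show "C i *v W l = riccati_eig (d l) i *\<^sub>R (Sigma *v W l)" if "l < ?n" for l i
      by (rule riccati_iterates_generalized_eigvec[OF Csuc inv eig0[OF that] profile(1)])
    show "W k \<bullet> (Sigma *v W l) = 0" if "k < ?n" "l < ?n" "k \<noteq> l" for k l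
      using W_orth that unfolding pairwise_def by blast
  qed (use basis W_nz W_ran W_ker profile(2-5) in \<open>auto intro: order.trans\<close>)
qed

end
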